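(* Let $\mathcal{C}$ be a skeletally small triangulated category and $\mathcal{D}$ a radical dense subcategory of $\mathcal{C}$. If $U\in\mathcal{C}$ and $[U]$ is a torsion element of $G(\mathcal{C})$, then $U\in\mathcal{D}$.
   Context: $G(\mathcal{C})$ is the Grothendieck group of $\mathcal{C}$ (free abelian group on isomorphism classes modulo $[V]=[U]+[W]$ for exact triangles $U\to V\to W\to U[1]$). A dense subcategory is a triangulated subcategory $\mathcal{D}$ (full, closed under $[\pm1]$, isomorphisms and cones) such that for every $U\in\mathcal{C}$ there is $V$ with $U\oplus V\in\mathcal{D}$; it is radical if $U^n\in\mathcal{D}$ for some $n\ge1$ implies $U\in\mathcal{D}$. *)

theory Defs
  imports Main
begin

text \<open>A (pre)triangulated category given by explicit data: objects of type 'o,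
morphisms of type 'm (each with a domain and codomain), composition (comp g f = g after f),
identities, the abelian group structure on Hom-sets, the suspension functor [1] on objects
and morphisms, and the class of exact (distinguished) triangles
(X, Y, Z, f, g, h) meaning X -f-> Y -g-> Z -h-> X[1].\<close>

record ('o, 'm) tricat =
  Ob :: "'o set"
  Mor :: "'m set"
  dom :: "'m \<Rightarrow> 'o"
  cod :: "'m \<Rightarrow> 'o"
  comp :: "'m \<Rightarrow> 'm \<Rightarrow> 'm"
  ident :: "'o \<Rightarrow> 'm"
  madd :: "'m \<Rightarrow> 'm \<Rightarrow> 'm"
  mzero :: "'o \<Rightarrow> 'o \<Rightarrow> 'm"
  mneg :: "'m \<Rightarrow> 'm"
  shO :: "'o \<Rightarrow> 'o"
  shM :: "'m \<Rightarrow> 'm"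
  Tri :: "('o \<times> 'o \<times> 'o \<times> 'm \<times> 'm \<times> 'm) set"

definition hom :: "('o, 'm, 'x) tricat_scheme \<Rightarrow> 'o \<Rightarrow> 'o \<Rightarrow> 'm set" where
  "hom C X Y = {f \<in> Mor C. dom C f = X \<and> cod C f = Y}"

definition is_category :: "('o, 'm, 'x) tricat_scheme \<Rightarrow> bool" where
  "is_category C \<longleftrightarrow>
     (\<forall>f \<in> Mor C. dom C f \<in> Ob C \<and> cod C f \<in> Ob C) \<and>
     (\<forall>X \<in> Ob C. ident C X \<in> hom C X X) \<and>
     (\<forall>X \<in> Ob C. \<forall>Y \<in> Ob C. \<forall>Z \<in> Ob C. \<forall>f \<in> hom C X Y. \<forall>g \<in> hom C Y Z.
        comp C g f \<in> hom C X Z) \<and>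
     (\<forall>X \<in> Ob C. \<forall>Y \<in> Ob C. \<forall>f \<in> hom C X Y.
        comp C f (ident C X) = f \<and> comp C (ident C Y) f = f) \<and>
     (\<forall>W \<in> Ob C. \<forall>X \<in> Ob C. \<forall>Y \<in> Ob C. \<forall>Z \<in> Ob C.
        \<forall>f \<in> hom C W X. \<forall>g \<in> hom C X Y. \<forall>h \<in> hom C Y Z.
        comp C h (comp C g f) = comp C (comp C h g) f)"

definition is_preadditive :: "('o, 'm, 'x) tricat_scheme \<Rightarrow> bool" where
  "is_preadditive C \<longleftrightarrow> is_category C \<and>
     (\<forall>X \<in> Ob C. \<forall>Y \<in> Ob C.
        mzero C X Y \<in> hom C X Y \<and>
        (\<forall>f \<in> hom C X Y. \<forall>g \<in> hom C X Y. madd C f g \<in> hom C X Y \<and> madd C f g = madd C g f) \<and>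
        (\<forall>f \<in> hom C X Y. \<forall>g \<in> hom C X Y. \<forall>h \<in> hom C X Y.
            madd C (madd C f g) h = madd C f (madd C g h)) \<and>
        (\<forall>f \<in> hom C X Y. madd C f (mzero C X Y) = f \<and>
            mneg C f \<in> hom C X Y \<and> madd C f (mneg C f) = mzero C X Y)) \<and>
     (\<forall>X \<in> Ob C. \<forall>Y \<in> Ob C. \<forall>Z \<in> Ob C.
        (\<forall>f \<in> hom C X Y. \<forall>g \<in> hom C Y Z. \<forall>g' \<in> hom C Y Z.
            comp C (madd C g g') f = madd C (comp C g f) (comp C g' f)) \<and>
        (\<forall>f \<in> hom C X Y. \<forall>f' \<in> hom C X Y. \<forall>g \<in> hom C Y Z.
            comp C g (madd C f f') = madd C (comp C g f) (comp C g f')))"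

definition is_zero_obj :: "('o, 'm, 'x) tricat_scheme \<Rightarrow> 'o \<Rightarrow> bool" where
  "is_zero_obj C Z \<longleftrightarrow> Z \<in> Ob C \<and>
     (\<forall>X \<in> Ob C. hom C Z X = {mzero C Z X} \<and> hom C X Z = {mzero C X Z})"

definition is_biproduct :: "('o, 'm, 'x) tricat_scheme \<Rightarrow> 'o \<Rightarrow> 'o \<Rightarrow> 'o \<Rightarrow> bool" where
  "is_biproduct C S X Y \<longleftrightarrow> S \<in> Ob C \<and> X \<in> Ob C \<and> Y \<in> Ob C \<and>
     (\<exists>i1 i2 p1 p2. i1 \<in> hom C X S \<and> i2 \<in> hom C Y S \<and> p1 \<in> hom C S X \<and> p2 \<in> hom C S Y \<and>
        comp C p1 i1 = ident C X \<and> comp C p2 i2 = ident C Y \<and>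
        comp C p2 i1 = mzero C X Y \<and> comp C p1 i2 = mzero C Y X \<and>
        madd C (comp C i1 p1) (comp C i2 p2) = ident C S)"

definition is_additive :: "('o, 'm, 'x) tricat_scheme \<Rightarrow> bool" where
  "is_additive C \<longleftrightarrow> is_preadditive C \<and> (\<exists>Z. is_zero_obj C Z) \<and>
     (\<forall>X \<in> Ob C. \<forall>Y \<in> Ob C. \<exists>S. is_biproduct C S X Y)"

definition is_iso :: "('o, 'm, 'x) tricat_scheme \<Rightarrow> 'm \<Rightarrow> bool" where
  "is_iso C f \<longleftrightarrow> f \<in> Mor C \<and>
     (\<exists>g \<in> hom C (cod C f) (dom C f).
        comp C g f = ident C (dom C f) \<and> comp C f g = ident C (cod C f))"

definition isomorphic :: "('o, 'm, 'x) tricat_scheme \<Rightarrow> 'o \<Rightarrow> 'o \<Rightarrow> bool" where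
  "isomorphic C X Y \<longleftrightarrow> (\<exists>f \<in> hom C X Y. is_iso C f)"

definition shift_autoequivalence :: "('o, 'm, 'x) tricat_scheme \<Rightarrow> bool" where
  "shift_autoequivalence C \<longleftrightarrow>
     (\<forall>X \<in> Ob C. shO C X \<in> Ob C \<and> shM C (ident C X) = ident C (shO C X)) \<and>
     (\<forall>X \<in> Ob C. \<forall>Y \<in> Ob C. \<forall>f \<in> hom C X Y. shM C f \<in> hom C (shO C X) (shO C Y)) \<and>
     (\<forall>X \<in> Ob C. \<forall>Y \<in> Ob C. \<forall>Z \<in> Ob C. \<forall>f \<in> hom C X Y. \<forall>g \<in> hom C Y Z.
        shM C (comp C g f) = comp C (shM C g) (shM C f)) \<and>
     (\<forall>X \<in> Ob C. \<forall>Y \<in> Ob C. \<forall>f \<in> hom C X Y. \<forall>g \<in> hom C X Y.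
        shM C (madd C f g) = madd C (shM C f) (shM C g)) \<and>
     (\<forall>X \<in> Ob C. \<forall>Y \<in> Ob C. bij_betw (shM C) (hom C X Y) (hom C (shO C X) (shO C Y))) \<and>
     (\<forall>Y \<in> Ob C. \<exists>X \<in> Ob C. isomorphic C (shO C X) Y)"

definition is_candidate :: "('o, 'm, 'x) tricat_scheme \<Rightarrow> ('o \<times> 'o \<times> 'o \<times> 'm \<times> 'm \<times> 'm) \<Rightarrow> bool" where
  "is_candidate C T \<longleftrightarrow> (case T of (X, Y, Z, f, g, h) \<Rightarrow>
     X \<in> Ob C \<and> Y \<in> Ob C \<and> Z \<in> Ob C \<and>
     f \<in> hom C X Y \<and> g \<in> hom C Y Z \<and> h \<in> hom C Z (shO C X))"

definition is_triangulated :: "('o, 'm, 'x) tricat_scheme \<Rightarrow> bool" where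
  "is_triangulated C \<longleftrightarrow> is_additive C \<and> shift_autoequivalence C \<and>
     (\<forall>T \<in> Tri C. is_candidate C T) \<and>
     \<comment> \<open>TR1: closed under isomorphism of triangles\<close>
     (\<forall>X Y Z f g h X' Y' Z' f' g' h' a b c.
        (X, Y, Z, f, g, h) \<in> Tri C \<and> is_candidate C (X', Y', Z', f', g', h') \<and>
        a \<in> hom C X X' \<and> b \<in> hom C Y Y' \<and> c \<in> hom C Z Z' \<and>
        is_iso C a \<and> is_iso C b \<and> is_iso C c \<and>
        comp C b f = comp C f' a \<and> comp C c g = comp C g' b \<and>
        comp C (shM C a) h = comp C h' c
        \<longrightarrow> (X', Y', Z', f', g', h') \<in> Tri C) \<and>
     \<comment> \<open>TR1: X --id--> X --> 0 --> X[1] is exact\<close>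
     (\<forall>X \<in> Ob C. \<forall>Z. is_zero_obj C Z \<longrightarrow>
        (X, X, Z, ident C X, mzero C X Z, mzero C Z (shO C X)) \<in> Tri C) \<and>
     \<comment> \<open>TR1: every morphism embeds in an exact triangle\<close>
     (\<forall>X \<in> Ob C. \<forall>Y \<in> Ob C. \<forall>f \<in> hom C X Y. \<exists>Z g h. (X, Y, Z, f, g, h) \<in> Tri C) \<and>
     \<comment> \<open>TR2: rotation\<close>
     (\<forall>X Y Z f g h. is_candidate C (X, Y, Z, f, g, h) \<longrightarrow>
        ((X, Y, Z, f, g, h) \<in> Tri C \<longleftrightarrow>
         (Y, Z, shO C X, g, h, mneg C (shM C f)) \<in> Tri C)) \<and>
     \<comment> \<open>TR3: morphisms of triangles\<close>
     (\<forall>X Y Z f g h X' Y' Z' f' g' h' a b.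
        (X, Y, Z, f, g, h) \<in> Tri C \<and> (X', Y', Z', f', g', h') \<in> Tri C \<and>
        a \<in> hom C X X' \<and> b \<in> hom C Y Y' \<and> comp C b f = comp C f' a
        \<longrightarrow> (\<exists>c \<in> hom C Z Z'. comp C c g = comp C g' b \<and>
                comp C (shM C a) h = comp C h' c)) \<and>
     \<comment> \<open>TR4: octahedral axiom\<close>
     (\<forall>X Y Z f g Z' h j X' k l Y' m n.
        f \<in> hom C X Y \<and> g \<in> hom C Y Z \<and>
        (X, Y, Z', f, h, j) \<in> Tri C \<and> (Y, Z, X', g, k, l) \<in> Tri C \<and>
        (X, Z, Y', comp C g f, m, n) \<in> Tri C
        \<longrightarrow> (\<exists>u v. (Z', Y', X', u, v, comp C (shM C h) l) \<in> Tri C \<and>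
                comp C u h = comp C m g \<and> comp C n u = j \<and>
                comp C v m = k \<and> comp C l v = comp C (shM C f) n))"

text \<open>Dense subcategories (given by their object class; full by definition).\<close>
definition is_triangulated_subcat :: "('o, 'm, 'x) tricat_scheme \<Rightarrow> 'o set \<Rightarrow> bool" where
  "is_triangulated_subcat C D \<longleftrightarrow> D \<subseteq> Ob C \<and>
     (\<forall>X \<in> Ob C. X \<in> D \<longleftrightarrow> shO C X \<in> D) \<and>
     (\<forall>X \<in> D. \<forall>Y \<in> Ob C. isomorphic C X Y \<longrightarrow> Y \<in> D) \<and>
     (\<forall>X Y Z f g h. (X, Y, Z, f, g, h) \<in> Tri C \<and> X \<in> D \<and> Y \<in> D \<longrightarrow> Z \<in> D)"

definition is_dense_subcat :: "('o, 'm, 'x) tricat_scheme \<Rightarrow> 'o set \<Rightarrow> bool" where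
  "is_dense_subcat C D \<longleftrightarrow> is_triangulated_subcat C D \<and>
     (\<forall>U \<in> Ob C. \<exists>V \<in> Ob C. \<exists>S. is_biproduct C S U V \<and> S \<in> D)"

fun is_power :: "('o, 'm, 'x) tricat_scheme \<Rightarrow> nat \<Rightarrow> 'o \<Rightarrow> 'o \<Rightarrow> bool" where
  "is_power C 0 S U = is_zero_obj C S"
| "is_power C (Suc 0) S U = (U \<in> Ob C \<and> S \<in> Ob C \<and> isomorphic C S U)"
| "is_power C (Suc (Suc n)) S U = (\<exists>T. is_power C (Suc n) T U \<and> is_biproduct C S T U)"

definition is_radical :: "('o, 'm, 'x) tricat_scheme \<Rightarrow> 'o set \<Rightarrow> bool" where
  "is_radical C D \<longleftrightarrow>
     (\<forall>U \<in> Ob C. \<forall>n \<ge> 1. (\<exists>S \<in> D. is_power C n S U) \<longrightarrow> U \<in> D)"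

text \<open>Grothendieck group: free abelian group on objects (functions 'o \<Rightarrow> int with finite
support), modulo the subgroup grel generated by [X] - [Y] for isomorphic X, Y and
[V] - [U] - [W] for exact triangles U \<rightarrow> V \<rightarrow> W \<rightarrow> U[1].\<close>
definition gen :: "'o \<Rightarrow> 'o \<Rightarrow> int" where
  "gen X = (\<lambda>Y. if Y = X then 1 else 0)"

inductive_set grel :: "('o, 'm, 'x) tricat_scheme \<Rightarrow> ('o \<Rightarrow> int) set" for C where
  grel_zero: "(\<lambda>_. 0) \<in> grel C"
| grel_iso: "X \<in> Ob C \<Longrightarrow> Y \<in> Ob C \<Longrightarrow> isomorphic C X Y \<Longrightarrow>
     (\<lambda>A. gen X A - gen Y A) \<in> grel C"
| grel_tri: "(U, V, W, f, g, h) \<in> Tri C \<Longrightarrow>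
     (\<lambda>A. gen V A - gen U A - gen W A) \<in> grel C"
| grel_add: "a \<in> grel C \<Longrightarrow> b \<in> grel C \<Longrightarrow> (\<lambda>A. a A + b A) \<in> grel C"
| grel_neg: "a \<in> grel C \<Longrightarrow> (\<lambda>A. - a A) \<in> grel C"

definition class_torsion :: "('o, 'm, 'x) tricat_scheme \<Rightarrow> 'o \<Rightarrow> bool" where
  "class_torsion C U \<longleftrightarrow> (\<exists>n::nat. n \<ge> 1 \<and> (\<lambda>A. int n * gen U A) \<in> grel C)"

end

theory Submission
  imports Defs "HOL-Algebra.FiniteProduct"
begin

text \<open>Following Thomason, call objects X and Y D-equivalent when, for every W, X \<oplus> W \<in> D
  iff Y \<oplus> W \<in> D. Direct sum makes the D-equivalence classes a commutative monoid whose
  neutral element is the class D itself, and density makes it a group. The octahedral axiom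
  shows that the class map is multiplicative on exact triangles, so it factors through G(C).
  Hence n[U] = 0 in G(C) forces the class of U^n to be neutral, i.e. U^n \<in> D, and
  radicality gives U \<in> D.\<close>

section \<open>Additive calculus in a triangulated category\<close>

locale triangulated_category =
  fixes C :: "('o, 'm) tricat"
  assumes triangulated: "is_triangulated C"
begin

abbreviation comp_mor (infixr "\<cdot>" 75) where "g \<cdot> f \<equiv> comp C g f"
abbreviation add_mor (infixl "\<boxplus>" 65) where "f \<boxplus> g \<equiv> madd C f g"
abbreviation "neg f \<equiv> mneg C f"
abbreviation "zm X Y \<equiv> mzero C X Y"
abbreviation "idt X \<equiv> ident C X"
abbreviation "sh X \<equiv> shO C X"
abbreviation "shm f \<equiv> shM C f"

lemma additive: "is_additive C"
  using triangulated unfolding is_triangulated_def by (elim conjE) blast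

lemma preadditive: "is_preadditive C"
  using additive unfolding is_additive_def by blast

lemma category: "is_category C"
  using preadditive unfolding is_preadditive_def by blast

lemma hom_iff: "f \<in> Defs.hom C X Y \<longleftrightarrow> f \<in> Mor C \<and> dom C f = X \<and> cod C f = Y"
  by (simp add: Defs.hom_def)

lemma category_axioms:
  "f \<in> Mor C \<Longrightarrow> dom C f \<in> Ob C \<and> cod C f \<in> Ob C"
  "X \<in> Ob C \<Longrightarrow> idt X \<in> Defs.hom C X X"
  "\<lbrakk>X \<in> Ob C; Y \<in> Ob C; Z \<in> Ob C; f \<in> Defs.hom C X Y; g \<in> Defs.hom C Y Z\<rbrakk>
     \<Longrightarrow> g \<cdot> f \<in> Defs.hom C X Z"
  "\<lbrakk>X \<in> Ob C; Y \<in> Ob C; f \<in> Defs.hom C X Y\<rbrakk> \<Longrightarrow> f \<cdot> idt X = f \<and> idt Y \<cdot> f = f"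
  "\<lbrakk>W \<in> Ob C; X \<in> Ob C; Y \<in> Ob C; Z \<in> Ob C; f \<in> Defs.hom C W X; g \<in> Defs.hom C X Y;
     h \<in> Defs.hom C Y Z\<rbrakk> \<Longrightarrow> h \<cdot> (g \<cdot> f) = (h \<cdot> g) \<cdot> f"
  using category unfolding is_category_def by blast+

lemma preadditive_axioms:
  "\<lbrakk>X \<in> Ob C; Y \<in> Ob C\<rbrakk> \<Longrightarrow> zm X Y \<in> Defs.hom C X Y"
  "\<lbrakk>X \<in> Ob C; Y \<in> Ob C; f \<in> Defs.hom C X Y; g \<in> Defs.hom C X Y\<rbrakk>
     \<Longrightarrow> f \<boxplus> g \<in> Defs.hom C X Y \<and> f \<boxplus> g = g \<boxplus> f"
  "\<lbrakk>X \<in> Ob C; Y \<in> Ob C; f \<in> Defs.hom C X Y; g \<in> Defs.hom C X Y; h \<in> Defs.hom C X Y\<rbrakk>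
     \<Longrightarrow> (f \<boxplus> g) \<boxplus> h = f \<boxplus> (g \<boxplus> h)"
  "\<lbrakk>X \<in> Ob C; Y \<in> Ob C; f \<in> Defs.hom C X Y\<rbrakk>
     \<Longrightarrow> f \<boxplus> zm X Y = f \<and> neg f \<in> Defs.hom C X Y \<and> f \<boxplus> neg f = zm X Y"
  "\<lbrakk>X \<in> Ob C; Y \<in> Ob C; Z \<in> Ob C; f \<in> Defs.hom C X Y; g \<in> Defs.hom C Y Z; g' \<in> Defs.hom C Y Z\<rbrakk>
     \<Longrightarrow> (g \<boxplus> g') \<cdot> f = g \<cdot> f \<boxplus> g' \<cdot> f"
  "\<lbrakk>X \<in> Ob C; Y \<in> Ob C; Z \<in> Ob C; f \<in> Defs.hom C X Y; f' \<in> Defs.hom C X Y; g \<in> Defs.hom C Y Z\<rbrakk>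
     \<Longrightarrow> g \<cdot> (f \<boxplus> f') = g \<cdot> f \<boxplus> g \<cdot> f'"
  using preadditive unfolding is_preadditive_def by blast+

lemma mor_ob [simp]: "f \<in> Mor C \<Longrightarrow> dom C f \<in> Ob C" "f \<in> Mor C \<Longrightarrow> cod C f \<in> Ob C"
  using category_axioms(1) by auto

lemma ident_simps [simp]:
  "X \<in> Ob C \<Longrightarrow> idt X \<in> Mor C" "X \<in> Ob C \<Longrightarrow> dom C (idt X) = X" "X \<in> Ob C \<Longrightarrow> cod C (idt X) = X"
  using category_axioms(2) by (auto simp: hom_iff)

lemma comp_simps [simp]:
  assumes "f \<in> Mor C" "g \<in> Mor C" "dom C g = cod C f"
  shows "g \<cdot> f \<in> Mor C" "dom C (g \<cdot> f) = dom C f" "cod C (g \<cdot> f) = cod C g"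
  using category_axioms(3)[of "dom C f" "cod C f" "cod C g" f g] assms by (auto simp: hom_iff)

lemma comp_ident_right [simp]: "f \<in> Mor C \<Longrightarrow> dom C f = X \<Longrightarrow> f \<cdot> idt X = f"
  using category_axioms(4)[of "dom C f" "cod C f" f] by (auto simp: hom_iff)

lemma comp_ident_left [simp]: "f \<in> Mor C \<Longrightarrow> cod C f = Y \<Longrightarrow> idt Y \<cdot> f = f"
  using category_axioms(4)[of "dom C f" "cod C f" f] by (auto simp: hom_iff)

lemma comp_assoc [simp]:
  assumes "f \<in> Mor C" "g \<in> Mor C" "h \<in> Mor C" "dom C g = cod C f" "dom C h = cod C g"
  shows "(h \<cdot> g) \<cdot> f = h \<cdot> (g \<cdot> f)"
  using category_axioms(5)[of "dom C f" "cod C f" "cod C g" "cod C h" f g h] assms by (auto simp: hom_iff)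

lemma comp_reassoc:
  assumes "p \<cdot> i = w" "p \<in> Mor C" "i \<in> Mor C" "x \<in> Mor C" "dom C p = cod C i" "dom C i = cod C x"
  shows "p \<cdot> (i \<cdot> x) = w \<cdot> x"
  using comp_assoc[of x i p] assms by simp

lemma add_simps [simp]:
  assumes "f \<in> Mor C" "g \<in> Mor C" "dom C g = dom C f" "cod C g = cod C f"
  shows "f \<boxplus> g \<in> Mor C" "dom C (f \<boxplus> g) = dom C f" "cod C (f \<boxplus> g) = cod C f"
  using preadditive_axioms(2)[of "dom C f" "cod C f" f g] assms by (auto simp: hom_iff)

lemma add_commute:
  assumes "f \<in> Mor C" "g \<in> Mor C" "dom C g = dom C f" "cod C g = cod C f"
  shows "f \<boxplus> g = g \<boxplus> f"
  using preadditive_axioms(2)[of "dom C f" "cod C f" f g] assms by (auto simp: hom_iff)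

lemma add_assoc:
  assumes "f \<in> Mor C" "g \<in> Mor C" "h \<in> Mor C" "dom C g = dom C f" "cod C g = cod C f"
    "dom C h = dom C f" "cod C h = cod C f"
  shows "(f \<boxplus> g) \<boxplus> h = f \<boxplus> (g \<boxplus> h)"
  using preadditive_axioms(3)[of "dom C f" "cod C f" f g h] assms by (auto simp: hom_iff)

lemma zero_simps [simp]:
  "X \<in> Ob C \<Longrightarrow> Y \<in> Ob C \<Longrightarrow> zm X Y \<in> Mor C"
  "X \<in> Ob C \<Longrightarrow> Y \<in> Ob C \<Longrightarrow> dom C (zm X Y) = X"
  "X \<in> Ob C \<Longrightarrow> Y \<in> Ob C \<Longrightarrow> cod C (zm X Y) = Y"
  using preadditive_axioms(1) by (auto simp: hom_iff)

lemma add_zero_right [simp]: "f \<in> Mor C \<Longrightarrow> dom C f = X \<Longrightarrow> cod C f = Y \<Longrightarrow> f \<boxplus> zm X Y = f"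
  using preadditive_axioms(4)[of "dom C f" "cod C f" f] by (auto simp: hom_iff)

lemma neg_simps [simp]:
  assumes "f \<in> Mor C"
  shows "neg f \<in> Mor C" "dom C (neg f) = dom C f" "cod C (neg f) = cod C f"
  using preadditive_axioms(4)[of "dom C f" "cod C f" f] assms by (auto simp: hom_iff)

lemma add_neg_right [simp]: "f \<in> Mor C \<Longrightarrow> f \<boxplus> neg f = zm (dom C f) (cod C f)"
  using preadditive_axioms(4)[of "dom C f" "cod C f" f] by (auto simp: hom_iff)

lemma add_zero_left [simp]: "f \<in> Mor C \<Longrightarrow> dom C f = X \<Longrightarrow> cod C f = Y \<Longrightarrow> zm X Y \<boxplus> f = f"
  using add_commute[of f "zm X Y"] by auto

lemma add_neg_left [simp]: "f \<in> Mor C \<Longrightarrow> neg f \<boxplus> f = zm (dom C f) (cod C f)"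
  using add_commute[of f "neg f"] by simp

lemma comp_add_left [simp]:
  assumes "f \<in> Mor C" "g \<in> Mor C" "g' \<in> Mor C" "dom C g = cod C f" "dom C g' = dom C g" "cod C g' = cod C g"
  shows "(g \<boxplus> g') \<cdot> f = g \<cdot> f \<boxplus> g' \<cdot> f"
  using preadditive_axioms(5)[of "dom C f" "cod C f" "cod C g" f g g'] assms by (auto simp: hom_iff)

lemma comp_add_right [simp]:
  assumes "f \<in> Mor C" "f' \<in> Mor C" "g \<in> Mor C" "dom C g = cod C f" "dom C f' = dom C f" "cod C f' = cod C f"
  shows "g \<cdot> (f \<boxplus> f') = g \<cdot> f \<boxplus> g \<cdot> f'"
  using preadditive_axioms(6)[of "dom C f" "cod C f" "cod C g" f f' g] assms by (auto simp: hom_iff)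

lemma add_left_cancel:
  assumes "a \<in> Mor C" "b \<in> Mor C" "c \<in> Mor C" "dom C b = dom C a" "cod C b = cod C a"
    "dom C c = dom C a" "cod C c = cod C a" "a \<boxplus> b = a \<boxplus> c"
  shows "b = c"
proof -
  have "(neg a \<boxplus> a) \<boxplus> b = neg a \<boxplus> (a \<boxplus> b)" "(neg a \<boxplus> a) \<boxplus> c = neg a \<boxplus> (a \<boxplus> c)"
    by (rule add_assoc; use assms in auto)+
  then have "(neg a \<boxplus> a) \<boxplus> b = (neg a \<boxplus> a) \<boxplus> c" using assms(8) by simp
  then show ?thesis using assms by simp
qed

lemma add_self_eq_zero:
  assumes "a \<in> Mor C" "a \<boxplus> a = a"
  shows "a = zm (dom C a) (cod C a)"
  using add_left_cancel[of a a "zm (dom C a) (cod C a)"] assms by simp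

lemma neg_unique:
  assumes "a \<in> Mor C" "b \<in> Mor C" "dom C b = dom C a" "cod C b = cod C a"
    "a \<boxplus> b = zm (dom C a) (cod C a)"
  shows "b = neg a"
  using add_left_cancel[of a b "neg a"] assms by simp

lemma neg_neg [simp]: "a \<in> Mor C \<Longrightarrow> neg (neg a) = a"
  using neg_unique[of "neg a" a] by simp

lemma neg_inject:
  assumes "a \<in> Mor C" "b \<in> Mor C" "neg a = neg b"
  shows "a = b"
  using assms neg_neg by metis

lemma neg_zero [simp]: "X \<in> Ob C \<Longrightarrow> Y \<in> Ob C \<Longrightarrow> neg (zm X Y) = zm X Y"
  using neg_unique[of "zm X Y" "zm X Y"] by simp

lemma eq_if_add_neg_eq_zero:
  assumes "a \<in> Mor C" "b \<in> Mor C" "dom C b = dom C a" "cod C b = cod C a"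
    "a \<boxplus> neg b = zm (dom C a) (cod C a)"
  shows "a = b"
proof -
  have "neg b \<boxplus> a = zm (dom C a) (cod C a)" using assms by (simp add: add_commute)
  then have "a = neg (neg b)" using neg_unique[of "neg b" a] assms by simp
  then show ?thesis using assms by simp
qed

lemma comp_zero_right [simp]:
  assumes "f \<in> Mor C" "dom C f = Y" "W \<in> Ob C"
  shows "f \<cdot> zm W Y = zm W (cod C f)"
proof -
  have "f \<cdot> (zm W Y \<boxplus> zm W Y) = f \<cdot> zm W Y \<boxplus> f \<cdot> zm W Y"
    by (rule comp_add_right) (use assms in auto)
  then show ?thesis using add_self_eq_zero[of "f \<cdot> zm W Y"] assms by auto
qed

lemma comp_zero_left [simp]:
  assumes "f \<in> Mor C" "cod C f = Y" "W \<in> Ob C"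
  shows "zm Y W \<cdot> f = zm (dom C f) W"
proof -
  have "(zm Y W \<boxplus> zm Y W) \<cdot> f = zm Y W \<cdot> f \<boxplus> zm Y W \<cdot> f"
    by (rule comp_add_left) (use assms in auto)
  then show ?thesis using add_self_eq_zero[of "zm Y W \<cdot> f"] assms by auto
qed

lemma comp_neg_right [simp]:
  assumes "f \<in> Mor C" "g \<in> Mor C" "dom C g = cod C f"
  shows "g \<cdot> neg f = neg (g \<cdot> f)"
proof -
  have "g \<cdot> f \<boxplus> g \<cdot> neg f = g \<cdot> (f \<boxplus> neg f)"
    by (rule comp_add_right[symmetric]) (use assms in auto)
  then show ?thesis using neg_unique[of "g \<cdot> f" "g \<cdot> neg f"] assms by simp
qed

lemma comp_neg_left [simp]:
  assumes "f \<in> Mor C" "g \<in> Mor C" "dom C g = cod C f"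
  shows "neg g \<cdot> f = neg (g \<cdot> f)"
proof -
  have "g \<cdot> f \<boxplus> neg g \<cdot> f = (g \<boxplus> neg g) \<cdot> f"
    by (rule comp_add_left[symmetric]) (use assms in auto)
  then show ?thesis using neg_unique[of "g \<cdot> f" "neg g \<cdot> f"] assms by simp
qed

lemma shift_autoequivalence: "shift_autoequivalence C"
  using triangulated unfolding is_triangulated_def by (elim conjE) blast

lemma shift_axioms:
  "X \<in> Ob C \<Longrightarrow> sh X \<in> Ob C \<and> shm (idt X) = idt (sh X)"
  "\<lbrakk>X \<in> Ob C; Y \<in> Ob C; f \<in> Defs.hom C X Y\<rbrakk> \<Longrightarrow> shm f \<in> Defs.hom C (sh X) (sh Y)"
  "\<lbrakk>X \<in> Ob C; Y \<in> Ob C; Z \<in> Ob C; f \<in> Defs.hom C X Y; g \<in> Defs.hom C Y Z\<rbrakk>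
     \<Longrightarrow> shm (g \<cdot> f) = shm g \<cdot> shm f"
  "\<lbrakk>X \<in> Ob C; Y \<in> Ob C; f \<in> Defs.hom C X Y; g \<in> Defs.hom C X Y\<rbrakk> \<Longrightarrow> shm (f \<boxplus> g) = shm f \<boxplus> shm g"
  "\<lbrakk>X \<in> Ob C; Y \<in> Ob C\<rbrakk> \<Longrightarrow> bij_betw (shM C) (Defs.hom C X Y) (Defs.hom C (sh X) (sh Y))"
  using shift_autoequivalence unfolding shift_autoequivalence_def by blast+

lemma exact_triangle_candidate: "T \<in> Tri C \<Longrightarrow> is_candidate C T"
  using triangulated unfolding is_triangulated_def by (elim conjE) blast

lemma exact_triangle_iso_closed:
  "\<lbrakk>(X, Y, Z, f, g, h) \<in> Tri C; is_candidate C (X', Y', Z', f', g', h');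
    a \<in> Defs.hom C X X'; b \<in> Defs.hom C Y Y'; c \<in> Defs.hom C Z Z';
    Defs.is_iso C a; Defs.is_iso C b; Defs.is_iso C c;
    b \<cdot> f = f' \<cdot> a; c \<cdot> g = g' \<cdot> b; shm a \<cdot> h = h' \<cdot> c\<rbrakk>
    \<Longrightarrow> (X', Y', Z', f', g', h') \<in> Tri C"
  using triangulated unfolding is_triangulated_def by (elim conjE) blast

lemma exact_triangle_ident:
  "\<lbrakk>X \<in> Ob C; is_zero_obj C Z\<rbrakk> \<Longrightarrow> (X, X, Z, idt X, zm X Z, zm Z (sh X)) \<in> Tri C"
  using triangulated unfolding is_triangulated_def by (elim conjE) blast

lemma exact_triangle_exists:
  "f \<in> Mor C \<Longrightarrow> \<exists>Z g h. (dom C f, cod C f, Z, f, g, h) \<in> Tri C"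
  using triangulated unfolding is_triangulated_def by (elim conjE) (simp add: hom_iff)

lemma exact_triangle_rotate:
  assumes "(X, Y, Z, f, g, h) \<in> Tri C"
  shows "(Y, Z, sh X, g, h, neg (shm f)) \<in> Tri C"
proof -
  have "is_candidate C (X, Y, Z, f, g, h)" using exact_triangle_candidate assms .
  then show ?thesis using assms triangulated unfolding is_triangulated_def by (elim conjE) metis
qed

lemma exact_triangle_morphism [rule_format]:
  "\<forall>X Y Z f g h X' Y' Z' f' g' h' a b.
     (X, Y, Z, f, g, h) \<in> Tri C \<longrightarrow> (X', Y', Z', f', g', h') \<in> Tri C \<longrightarrow>
     a \<in> Defs.hom C X X' \<longrightarrow> b \<in> Defs.hom C Y Y' \<longrightarrow> b \<cdot> f = f' \<cdot> a \<longrightarrow>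
     (\<exists>c \<in> Defs.hom C Z Z'. c \<cdot> g = g' \<cdot> b \<and> shm a \<cdot> h = h' \<cdot> c)"
  using triangulated unfolding is_triangulated_def by (elim conjE) simp

lemma octahedral [rule_format]:
  "\<forall>X Y Z f g Z' h j X' k l Y' m n.
     f \<in> Defs.hom C X Y \<longrightarrow> g \<in> Defs.hom C Y Z \<longrightarrow>
     (X, Y, Z', f, h, j) \<in> Tri C \<longrightarrow> (Y, Z, X', g, k, l) \<in> Tri C \<longrightarrow>
     (X, Z, Y', g \<cdot> f, m, n) \<in> Tri C \<longrightarrow>
     (\<exists>u v. (Z', Y', X', u, v, shm h \<cdot> l) \<in> Tri C \<and>
        u \<cdot> h = m \<cdot> g \<and> n \<cdot> u = j \<and> v \<cdot> m = k \<and> l \<cdot> v = shm f \<cdot> n)"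
  using triangulated unfolding is_triangulated_def by (elim conjE) simp

lemma shift_ob [simp]: "X \<in> Ob C \<Longrightarrow> sh X \<in> Ob C"
  using shift_axioms(1) by blast

lemma shift_ident [simp]: "X \<in> Ob C \<Longrightarrow> shm (idt X) = idt (sh X)"
  using shift_axioms(1) by blast

lemma shift_simps [simp]:
  assumes "f \<in> Mor C"
  shows "shm f \<in> Mor C" "dom C (shm f) = sh (dom C f)" "cod C (shm f) = sh (cod C f)"
  using shift_axioms(2)[of "dom C f" "cod C f" f] assms by (auto simp: hom_iff)

lemma shift_comp [simp]:
  assumes "f \<in> Mor C" "g \<in> Mor C" "dom C g = cod C f"
  shows "shm (g \<cdot> f) = shm g \<cdot> shm f"
  using shift_axioms(3)[of "dom C f" "cod C f" "cod C g" f g] assms by (auto simp: hom_iff)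

lemma shift_add [simp]:
  assumes "f \<in> Mor C" "g \<in> Mor C" "dom C g = dom C f" "cod C g = cod C f"
  shows "shm (f \<boxplus> g) = shm f \<boxplus> shm g"
  using shift_axioms(4)[of "dom C f" "cod C f" f g] assms by (auto simp: hom_iff)

lemma shift_zero [simp]:
  assumes "X \<in> Ob C" "Y \<in> Ob C"
  shows "shm (zm X Y) = zm (sh X) (sh Y)"
proof -
  have "shm (zm X Y \<boxplus> zm X Y) = shm (zm X Y) \<boxplus> shm (zm X Y)"
    by (rule shift_add) (use assms in auto)
  then show ?thesis using add_self_eq_zero[of "shm (zm X Y)"] assms by simp
qed

lemma shift_neg [simp]:
  assumes "f \<in> Mor C"
  shows "shm (neg f) = neg (shm f)"
proof -
  have "shm f \<boxplus> shm (neg f) = shm (f \<boxplus> neg f)" by (rule shift_add[symmetric]) (use assms in auto)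
  then show ?thesis using neg_unique[of "shm f" "shm (neg f)"] assms by simp
qed

lemma shift_inject:
  assumes "f \<in> Mor C" "g \<in> Mor C" "dom C g = dom C f" "cod C g = cod C f" "shm f = shm g"
  shows "f = g"
  using shift_axioms(5)[of "dom C f" "cod C f"] assms unfolding bij_betw_def inj_on_def
  by (auto simp: hom_iff)

lemma shift_full:
  assumes "X \<in> Ob C" "Y \<in> Ob C" "g \<in> Mor C" "dom C g = sh X" "cod C g = sh Y"
  obtains f where "f \<in> Mor C" "dom C f = X" "cod C f = Y" "shm f = g"
proof -
  have "g \<in> shM C ` Defs.hom C X Y"
    using shift_axioms(5)[OF assms(1,2)] assms unfolding bij_betw_def by (auto simp: hom_iff)
  then show ?thesis using that by (auto simp: hom_iff)
qed

lemma zero_obj_exists: "\<exists>Z. is_zero_obj C Z"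
  using additive unfolding is_additive_def by blast

lemma zero_obj_ob: "is_zero_obj C Z \<Longrightarrow> Z \<in> Ob C"
  unfolding is_zero_obj_def by blast

lemma mor_from_zero_obj:
  assumes "is_zero_obj C Z" "f \<in> Mor C" "dom C f = Z"
  shows "f = zm Z (cod C f)"
proof -
  have "Defs.hom C Z (cod C f) = {zm Z (cod C f)}"
    using assms unfolding is_zero_obj_def by simp
  moreover have "f \<in> Defs.hom C Z (cod C f)" using assms by (simp add: hom_iff)
  ultimately show ?thesis by blast
qed

lemma isomorphicI:
  assumes "f \<in> Mor C" "g \<in> Mor C" "dom C f = X" "cod C f = Y" "dom C g = Y" "cod C g = X"
    "g \<cdot> f = idt X" "f \<cdot> g = idt Y"
  shows "Defs.isomorphic C X Y"
proof -
  have "Defs.is_iso C f" unfolding Defs.is_iso_def using assms by (auto simp: hom_iff)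
  then show ?thesis unfolding Defs.isomorphic_def using assms by (auto simp: hom_iff)
qed

lemma isomorphicE:
  assumes "Defs.isomorphic C X Y"
  obtains f g where "f \<in> Mor C" "g \<in> Mor C" "dom C f = X" "cod C f = Y" "dom C g = Y" "cod C g = X"
    "g \<cdot> f = idt X" "f \<cdot> g = idt Y"
  using assms unfolding Defs.isomorphic_def Defs.is_iso_def by (auto simp: hom_iff)

lemma isomorphic_ob: "Defs.isomorphic C X Y \<Longrightarrow> X \<in> Ob C \<and> Y \<in> Ob C"
  by (elim isomorphicE) (metis mor_ob)

lemma isomorphic_refl: "X \<in> Ob C \<Longrightarrow> Defs.isomorphic C X X"
  by (rule isomorphicI[of "idt X" "idt X"]) auto

lemma isomorphic_sym: "Defs.isomorphic C X Y \<Longrightarrow> Defs.isomorphic C Y X"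
  by (elim isomorphicE) (rule isomorphicI)

lemma is_isoI:
  assumes "k \<in> Mor C" "k' \<in> Mor C" "dom C k' = cod C k" "cod C k' = dom C k"
    "k' \<cdot> k = idt (dom C k)" "k \<cdot> k' = idt (cod C k)"
  shows "Defs.is_iso C k"
  unfolding Defs.is_iso_def using assms by (auto simp: hom_iff)

lemma exact_triangle_simps:
  assumes "(X, Y, Z, f, g, h) \<in> Tri C"
  shows "X \<in> Ob C" "Y \<in> Ob C" "Z \<in> Ob C" "f \<in> Mor C" "dom C f = X" "cod C f = Y"
    "g \<in> Mor C" "dom C g = Y" "cod C g = Z" "h \<in> Mor C" "dom C h = Z" "cod C h = sh X"
  using exact_triangle_candidate[OF assms] unfolding is_candidate_def by (auto simp: hom_iff)

lemma exact_triangle_rotate2: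
  assumes "(X, Y, Z, f, g, h) \<in> Tri C"
  shows "(Z, sh X, sh Y, h, neg (shm f), neg (shm g)) \<in> Tri C"
  using exact_triangle_rotate[OF exact_triangle_rotate[OF assms]] .

lemma exact_triangle_comp_zero:
  assumes t: "(X, Y, Z, f, g, h) \<in> Tri C"
  shows "g \<cdot> f = zm X Z"
proof -
  note c = exact_triangle_simps[OF t]
  obtain Z0 where Z0: "is_zero_obj C Z0" using zero_obj_exists by blast
  have "Z0 \<in> Ob C" using zero_obj_ob[OF Z0] .
  moreover obtain k where "k \<in> Defs.hom C Z0 Z" "k \<cdot> zm X Z0 = g \<cdot> f"
    using exact_triangle_morphism[OF exact_triangle_ident[OF c(1) Z0] t, of "idt X" f] c calculation
    by (auto simp: hom_iff)
  ultimately show ?thesis using c by (auto simp: hom_iff)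
qed

text \<open>TR3 applied to the rotated triangles T \<rightarrow> 0 \<rightarrow> T[1] \<rightarrow> T[1] and Y \<rightarrow> Z \<rightarrow> X[1] \<rightarrow> Y[1]
  yields a morphism T[1] \<rightarrow> X[1]; desuspending it gives the lift of t.\<close>

lemma exact_triangle_lift:
  assumes t: "(X, Y, Z, f, g, h) \<in> Tri C" and tm: "t \<in> Mor C" "cod C t = Y"
    and gt: "g \<cdot> t = zm (dom C t) Z"
  obtains s where "s \<in> Mor C" "dom C s = dom C t" "cod C s = X" "f \<cdot> s = t"
proof -
  note c = exact_triangle_simps[OF t]
  define T where "T = dom C t"
  have T: "T \<in> Ob C" using tm T_def by simp
  obtain Z0 where Z0: "is_zero_obj C Z0" using zero_obj_exists by blast
  have Z0o: "Z0 \<in> Ob C" using zero_obj_ob[OF Z0] .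
  have r0: "(T, Z0, sh T, zm T Z0, zm Z0 (sh T), neg (shm (idt T))) \<in> Tri C"
    using exact_triangle_rotate[OF exact_triangle_ident[OF T Z0]] .
  have "zm Z0 Z \<cdot> zm T Z0 = g \<cdot> t" using gt Z0o T c T_def by simp
  then obtain k where k: "k \<in> Defs.hom C (sh T) (sh X)" "shm t \<cdot> neg (shm (idt T)) = neg (shm f) \<cdot> k"
    using exact_triangle_morphism[OF r0 exact_triangle_rotate[OF t], of t "zm Z0 Z"] tm c Z0o T T_def
    by (auto simp: hom_iff)
  then have "neg (shm t) = neg (shm f \<cdot> k)" using tm c T T_def by (simp add: hom_iff)
  then have e: "shm t = shm f \<cdot> k" using neg_inject k(1) tm c by (auto simp: hom_iff)
  obtain s where s: "s \<in> Mor C" "dom C s = T" "cod C s = X" "shm s = k"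
    using shift_full[of T X k] k T c by (auto simp: hom_iff)
  have "t = f \<cdot> s" using shift_inject[of t "f \<cdot> s"] e s c tm T_def by simp
  then show ?thesis using that s T_def by auto
qed

lemma split_triangle_mono:
  assumes t: "(X, Q, Y, u, v, zm Y (sh X)) \<in> Tri C"
    and e: "e \<in> Mor C" "cod C e = X" "u \<cdot> e = zm (dom C e) Q"
  shows "e = zm (dom C e) X"
proof -
  note c = exact_triangle_simps[OF t]
  have r2: "(Y, sh X, sh Q, zm Y (sh X), neg (shm u), neg (shm v)) \<in> Tri C"
    using exact_triangle_rotate2[OF t] .
  have "neg (shm u) \<cdot> shm e = neg (shm (u \<cdot> e))" using c e(1,2) by simp
  also have "\<dots> = zm (sh (dom C e)) (sh Q)" using e c by simp
  finally obtain s where "s \<in> Mor C" "dom C s = sh (dom C e)" "cod C s = Y" "zm Y (sh X) \<cdot> s = shm e"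
    using exact_triangle_lift[OF r2, of "shm e"] e c by auto
  then have "shm e = shm (zm (dom C e) X)" using e c by simp
  then show ?thesis using shift_inject[of e "zm (dom C e) X"] e c by simp
qed

section \<open>Biproducts\<close>

definition biproduct_with :: "'o \<Rightarrow> 'o \<Rightarrow> 'o \<Rightarrow> 'm \<Rightarrow> 'm \<Rightarrow> 'm \<Rightarrow> 'm \<Rightarrow> bool" where
  "biproduct_with S X Y i1 i2 p1 p2 \<longleftrightarrow> S \<in> Ob C \<and> X \<in> Ob C \<and> Y \<in> Ob C \<and>
     i1 \<in> Mor C \<and> dom C i1 = X \<and> cod C i1 = S \<and> i2 \<in> Mor C \<and> dom C i2 = Y \<and> cod C i2 = S \<and>
     p1 \<in> Mor C \<and> dom C p1 = S \<and> cod C p1 = X \<and> p2 \<in> Mor C \<and> dom C p2 = S \<and> cod C p2 = Y \<and>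
     p1 \<cdot> i1 = idt X \<and> p2 \<cdot> i2 = idt Y \<and> p2 \<cdot> i1 = zm X Y \<and> p1 \<cdot> i2 = zm Y X \<and>
     i1 \<cdot> p1 \<boxplus> i2 \<cdot> p2 = idt S"

lemma is_biproduct_iff: "is_biproduct C S X Y \<longleftrightarrow> (\<exists>i1 i2 p1 p2. biproduct_with S X Y i1 i2 p1 p2)"
  unfolding is_biproduct_def biproduct_with_def hom_iff by blast

lemma biproduct_withD:
  assumes "biproduct_with S X Y i1 i2 p1 p2"
  shows "S \<in> Ob C" "X \<in> Ob C" "Y \<in> Ob C"
    "i1 \<in> Mor C" "dom C i1 = X" "cod C i1 = S" "i2 \<in> Mor C" "dom C i2 = Y" "cod C i2 = S"
    "p1 \<in> Mor C" "dom C p1 = S" "cod C p1 = X" "p2 \<in> Mor C" "dom C p2 = S" "cod C p2 = Y"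
  using assms unfolding biproduct_with_def by blast+

lemma biproduct_with_eqs:
  assumes "biproduct_with S X Y i1 i2 p1 p2"
  shows "p1 \<cdot> i1 = idt X" "p2 \<cdot> i2 = idt Y" "p2 \<cdot> i1 = zm X Y" "p1 \<cdot> i2 = zm Y X"
    "i1 \<cdot> p1 \<boxplus> i2 \<cdot> p2 = idt S"
  using assms unfolding biproduct_with_def by blast+

text \<open>The section s of v lifts idt Y along the rotated triangle; the retraction r of u lifts
  idt Q - s v along the triangle itself.\<close>

lemma split_triangle_biproduct:
  assumes t: "(X, Q, Y, u, v, zm Y (sh X)) \<in> Tri C"
  obtains s r where "biproduct_with Q X Y u s r v"
proof -
  note c = exact_triangle_simps[OF t]
  obtain s where s: "s \<in> Mor C" "dom C s = Y" "cod C s = Q" "v \<cdot> s = idt Y"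
    using exact_triangle_lift[OF exact_triangle_rotate[OF t], of "idt Y"] c by auto
  define e where "e = idt Q \<boxplus> neg (s \<cdot> v)"
  have e: "e \<in> Mor C" "dom C e = Q" "cod C e = Q" using s c e_def by auto
  have vs: "v \<cdot> (s \<cdot> v) = v" using s c comp_reassoc[OF s(4), of v] by simp
  have "v \<cdot> e = v \<cdot> idt Q \<boxplus> v \<cdot> neg (s \<cdot> v)"
    unfolding e_def by (rule comp_add_right) (use s c in auto)
  then have "v \<cdot> e = zm Q Y" using s c vs by simp
  then obtain r where r: "r \<in> Mor C" "dom C r = Q" "cod C r = X" "u \<cdot> r = e"
    using exact_triangle_lift[OF t, of e] e by auto
  have vu: "v \<cdot> u = zm X Y" using exact_triangle_comp_zero[OF t] .
  have eu: "e \<cdot> u = u" unfolding e_def using s c vu by simp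
  have es: "e \<cdot> s = zm Y Q" unfolding e_def using s c comp_reassoc[OF s(4), of v] by simp
  have ru: "r \<cdot> u = idt X"
  proof -
    have "u \<cdot> (r \<cdot> u \<boxplus> neg (idt X)) = u \<cdot> (r \<cdot> u) \<boxplus> u \<cdot> neg (idt X)"
      by (rule comp_add_right) (use r c in auto)
    also have "\<dots> = zm X Q" using comp_reassoc[OF r(4), of u] r c e eu by simp
    finally have "r \<cdot> u \<boxplus> neg (idt X) = zm X X"
      using split_triangle_mono[OF t, of "r \<cdot> u \<boxplus> neg (idt X)"] r c by simp
    then show ?thesis using eq_if_add_neg_eq_zero[of "r \<cdot> u" "idt X"] r c by simp
  qed
  have rs: "r \<cdot> s = zm Y X"
  proof -
    have "u \<cdot> (r \<cdot> s) = zm Y Q" using comp_reassoc[OF r(4), of s] r c s e es by simp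
    then show ?thesis using split_triangle_mono[OF t, of "r \<cdot> s"] r c s by simp
  qed
  have "u \<cdot> r \<boxplus> s \<cdot> v = (idt Q \<boxplus> neg (s \<cdot> v)) \<boxplus> s \<cdot> v" using r e_def by simp
  also have "\<dots> = idt Q \<boxplus> (neg (s \<cdot> v) \<boxplus> s \<cdot> v)" by (rule add_assoc) (use s c in auto)
  finally have "u \<cdot> r \<boxplus> s \<cdot> v = idt Q" using s c by simp
  then have "biproduct_with Q X Y u s r v" unfolding biproduct_with_def using c s r ru rs vu by auto
  then show ?thesis using that by blast
qed

lemma exact_triangle_retraction_zero:
  assumes t: "(X, S, Z, i, g, h) \<in> Tri C"
    and p: "p \<in> Mor C" "dom C p = S" "cod C p = X" "p \<cdot> i = idt X"
  shows "h = zm Z (sh X)"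
proof -
  note c = exact_triangle_simps[OF t]
  have "neg (shm i) \<cdot> h = zm Z (sh S)"
    using exact_triangle_comp_zero[OF exact_triangle_rotate2[OF t]] .
  then have "neg (shm i \<cdot> h) = neg (zm Z (sh S))" using c by simp
  then have ih: "shm i \<cdot> h = zm Z (sh S)" using neg_inject c by auto
  have "shm p \<cdot> shm i = idt (sh X)" using shift_comp[of i p, symmetric] p c by simp
  then have "h = (shm p \<cdot> shm i) \<cdot> h" using c by simp
  also have "\<dots> = shm p \<cdot> (shm i \<cdot> h)" by (rule comp_assoc) (use p c in auto)
  finally show ?thesis using ih p c by simp
qed

text \<open>The cone Z of i1 splits as S = X \<oplus> Z; comparing the two decompositions of S gives
  the isomorphism Z \<cong> Y.\<close>

lemma biproduct_triangle:
  assumes b: "biproduct_with S X Y i1 i2 p1 p2"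
  shows "(X, S, Y, i1, p2, zm Y (sh X)) \<in> Tri C"
proof -
  note B = biproduct_withD[OF b] and E = biproduct_with_eqs[OF b]
  obtain Z g h where t0: "(X, S, Z, i1, g, h) \<in> Tri C" using exact_triangle_exists[of i1] B by auto
  note c = exact_triangle_simps[OF t0]
  have t: "(X, S, Z, i1, g, zm Z (sh X)) \<in> Tri C"
    using t0 exact_triangle_retraction_zero[OF t0, of p1] B E by simp
  obtain s r where b': "biproduct_with S X Z i1 s r g" using split_triangle_biproduct[OF t] .
  note B' = biproduct_withD[OF b'] and E' = biproduct_with_eqs[OF b']
  define k where "k = p2 \<cdot> s"
  define k' where "k' = g \<cdot> i2"
  have k: "k \<in> Mor C" "dom C k = Z" "cod C k = Y" "k' \<in> Mor C" "dom C k' = Y" "cod C k' = Z"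
    unfolding k_def k'_def using B B' by auto
  have gi1: "g \<cdot> i1 = zm X Z" using exact_triangle_comp_zero[OF t] .
  have "p2 \<cdot> ((i1 \<cdot> r \<boxplus> s \<cdot> g) \<cdot> i2) = k \<cdot> k'"
    unfolding k_def k'_def using B B' comp_reassoc[OF E(3)] by simp
  then have kk': "k \<cdot> k' = idt Y" using B B' E E' by simp
  have "g \<cdot> ((i1 \<cdot> p1 \<boxplus> i2 \<cdot> p2) \<cdot> s) = k' \<cdot> k"
    unfolding k_def k'_def using B B' comp_reassoc[OF gi1] by simp
  then have k'k: "k' \<cdot> k = idt Z" using B B' E E' by simp
  have "p2 \<cdot> (i1 \<cdot> r \<boxplus> s \<cdot> g) = k \<cdot> g"
    unfolding k_def using B B' comp_reassoc[OF E(3)] by simp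
  then have kg: "k \<cdot> g = p2" using B B' E E' by simp
  show ?thesis
  proof (rule exact_triangle_iso_closed[OF t])
    show "is_candidate C (X, S, Y, i1, p2, zm Y (sh X))"
      unfolding is_candidate_def using B by (auto simp: hom_iff)
    show "idt X \<in> Defs.hom C X X" "idt S \<in> Defs.hom C S S" "k \<in> Defs.hom C Z Y"
      using B k by (auto simp: hom_iff)
    show "Defs.is_iso C (idt X)" "Defs.is_iso C (idt S)"
      using is_isoI[of "idt X" "idt X"] is_isoI[of "idt S" "idt S"] B by auto
    show "Defs.is_iso C k" using is_isoI[of k k'] k kk' k'k by simp
  qed (use B k kg c in auto)
qed

lemma biproduct_with_shift:
  assumes b: "biproduct_with S X Y i1 i2 p1 p2"
  shows "biproduct_with (sh S) (sh X) (sh Y) (shm i1) (shm i2) (shm p1) (shm p2)"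
proof -
  note B = biproduct_withD[OF b] and E = biproduct_with_eqs[OF b]
  have "shm (i1 \<cdot> p1 \<boxplus> i2 \<cdot> p2) = shm (idt S)" using E by simp
  then have "shm i1 \<cdot> shm p1 \<boxplus> shm i2 \<cdot> shm p2 = idt (sh S)" using B by simp
  moreover have "shm p1 \<cdot> shm i1 = idt (sh X)" "shm p2 \<cdot> shm i2 = idt (sh Y)"
    "shm p2 \<cdot> shm i1 = zm (sh X) (sh Y)" "shm p1 \<cdot> shm i2 = zm (sh Y) (sh X)"
    using shift_comp[of i1 p1] shift_comp[of i2 p2] shift_comp[of i1 p2] shift_comp[of i2 p1] B E
    by simp_all
  ultimately show ?thesis unfolding biproduct_with_def using B by simp
qed

lemma biproduct_with_swap: "biproduct_with S X Y i1 i2 p1 p2 \<Longrightarrow> biproduct_with S Y X i2 i1 p2 p1"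
  unfolding biproduct_with_def by (auto simp: add_commute)

lemma is_biproduct_swap: "is_biproduct C S X Y \<Longrightarrow> is_biproduct C S Y X"
  unfolding is_biproduct_iff using biproduct_with_swap by blast

lemma is_biproduct_exists: "X \<in> Ob C \<Longrightarrow> Y \<in> Ob C \<Longrightarrow> \<exists>S. is_biproduct C S X Y"
  using additive unfolding is_additive_def by blast

lemma is_biproduct_ob: "is_biproduct C S X Y \<Longrightarrow> S \<in> Ob C \<and> X \<in> Ob C \<and> Y \<in> Ob C"
  unfolding is_biproduct_def by blast

lemma biproduct_with_unique:
  assumes b: "biproduct_with S X Y i1 i2 p1 p2" and b': "biproduct_with T X Y j1 j2 q1 q2"
  shows "Defs.isomorphic C S T"
proof -
  note B = biproduct_withD[OF b] and B' = biproduct_withD[OF b']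
    and E = biproduct_with_eqs[OF b] and E' = biproduct_with_eqs[OF b']
  show ?thesis
  proof (rule isomorphicI[of "j1 \<cdot> p1 \<boxplus> j2 \<cdot> p2" "i1 \<cdot> q1 \<boxplus> i2 \<cdot> q2"])
    show "(i1 \<cdot> q1 \<boxplus> i2 \<cdot> q2) \<cdot> (j1 \<cdot> p1 \<boxplus> j2 \<cdot> p2) = idt S"
      using B B' E comp_reassoc[OF E'(1)] comp_reassoc[OF E'(2)] comp_reassoc[OF E'(3)]
        comp_reassoc[OF E'(4)] by simp
    show "(j1 \<cdot> p1 \<boxplus> j2 \<cdot> p2) \<cdot> (i1 \<cdot> q1 \<boxplus> i2 \<cdot> q2) = idt T"
      using B B' E' comp_reassoc[OF E(1)] comp_reassoc[OF E(2)] comp_reassoc[OF E(3)]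
        comp_reassoc[OF E(4)] by simp
  qed (use B B' in auto)
qed

lemma is_biproduct_unique:
  "is_biproduct C S X Y \<Longrightarrow> is_biproduct C T X Y \<Longrightarrow> Defs.isomorphic C S T"
  unfolding is_biproduct_iff using biproduct_with_unique by blast

lemma is_biproduct_zero_left:
  assumes "is_biproduct C S Z0 X" "is_zero_obj C Z0"
  shows "Defs.isomorphic C S X"
proof -
  obtain i1 i2 p1 p2 where b: "biproduct_with S X Z0 i1 i2 p1 p2"
    using is_biproduct_swap[OF assms(1)] unfolding is_biproduct_iff by blast
  note B = biproduct_withD[OF b] and E = biproduct_with_eqs[OF b]
  have "i2 = zm Z0 S" using mor_from_zero_obj[OF assms(2), of i2] B by simp
  then have "i1 \<cdot> p1 = idt S" using B E by simp
  then show ?thesis using isomorphicI[of p1 i1] B E by simp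
qed

lemma biproduct_with_assoc:
  assumes b1: "biproduct_with S X Y i1 i2 p1 p2" and b2: "biproduct_with P S W j1 j2 q1 q2"
    and b3: "biproduct_with R Y W k1 k2 r1 r2"
  shows "biproduct_with P X R (j1 \<cdot> i1) (j1 \<cdot> (i2 \<cdot> r1) \<boxplus> j2 \<cdot> r2)
           (p1 \<cdot> q1) (k1 \<cdot> (p2 \<cdot> q1) \<boxplus> k2 \<cdot> q2)"
proof -
  note T = biproduct_withD[OF b1] biproduct_withD[OF b2] biproduct_withD[OF b3]
  note E1 = biproduct_with_eqs[OF b1] and E2 = biproduct_with_eqs[OF b2]
    and E3 = biproduct_with_eqs[OF b3]
  note A = comp_reassoc[OF E1(1)] comp_reassoc[OF E1(2)] comp_reassoc[OF E1(3)]
    comp_reassoc[OF E1(4)] comp_reassoc[OF E2(1)] comp_reassoc[OF E2(2)] comp_reassoc[OF E2(3)]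
    comp_reassoc[OF E2(4)] comp_reassoc[OF E3(1)] comp_reassoc[OF E3(2)] comp_reassoc[OF E3(3)]
    comp_reassoc[OF E3(4)]
  have "(j1 \<cdot> (i2 \<cdot> r1) \<boxplus> j2 \<cdot> r2) \<cdot> (k1 \<cdot> (p2 \<cdot> q1) \<boxplus> k2 \<cdot> q2)
      = j1 \<cdot> (i2 \<cdot> (p2 \<cdot> q1)) \<boxplus> j2 \<cdot> q2"
    using T A by simp
  then have "j1 \<cdot> i1 \<cdot> (p1 \<cdot> q1) \<boxplus> (j1 \<cdot> (i2 \<cdot> r1) \<boxplus> j2 \<cdot> r2) \<cdot> (k1 \<cdot> (p2 \<cdot> q1) \<boxplus> k2 \<cdot> q2)
      = j1 \<cdot> ((i1 \<cdot> p1 \<boxplus> i2 \<cdot> p2) \<cdot> q1) \<boxplus> j2 \<cdot> q2"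
    using T by (simp add: add_assoc)
  also have "\<dots> = idt P" using T E1 E2 by simp
  finally show ?thesis unfolding biproduct_with_def using T A E1 E2 E3 by simp
qed

lemma is_biproduct_assoc:
  "\<lbrakk>is_biproduct C S X Y; is_biproduct C P S W; is_biproduct C R Y W\<rbrakk> \<Longrightarrow> is_biproduct C P X R"
  unfolding is_biproduct_iff by (blast intro: biproduct_with_assoc)

lemma is_biproduct_iso_cong:
  assumes "is_biproduct C S X W" "is_biproduct C T Y W" "Defs.isomorphic C X Y"
  shows "Defs.isomorphic C S T"
proof -
  obtain f g where fg: "f \<in> Mor C" "g \<in> Mor C" "dom C f = X" "cod C f = Y" "dom C g = Y"
    "cod C g = X" "g \<cdot> f = idt X" "f \<cdot> g = idt Y"
    using isomorphicE[OF assms(3)] by blast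
  obtain j1 j2 q1 q2 where b: "biproduct_with T Y W j1 j2 q1 q2"
    using assms(2) unfolding is_biproduct_iff by blast
  note B = biproduct_withD[OF b] and E = biproduct_with_eqs[OF b]
  have "(g \<cdot> q1) \<cdot> (j1 \<cdot> f) = idt X" using B E fg comp_reassoc[OF E(1)] by simp
  moreover have "q2 \<cdot> (j1 \<cdot> f) = zm X W" using B E fg comp_reassoc[OF E(3)] by simp
  moreover have "(g \<cdot> q1) \<cdot> j2 = zm W X" using B E fg by simp
  moreover have "j1 \<cdot> f \<cdot> (g \<cdot> q1) \<boxplus> j2 \<cdot> q2 = idt T" using B E fg comp_reassoc[OF fg(8)] by simp
  ultimately have "biproduct_with T X W (j1 \<cdot> f) j2 (g \<cdot> q1) q2"
    unfolding biproduct_with_def using B E fg mor_ob(1)[OF fg(1)] by simp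
  then have "is_biproduct C T X W" unfolding is_biproduct_iff by blast
  then show ?thesis using is_biproduct_unique assms(1) by blast
qed

text \<open>Octahedral axiom applied to X \<rightarrow> Y \<rightarrow> Y \<oplus> A, using that
  Y \<rightarrow> Y \<oplus> A \<rightarrow> A \<rightarrow> Y[1] is exact with vanishing third morphism.\<close>

lemma cone_comp_biproduct_inclusion:
  assumes t: "(X, Y, Z, f, g, h) \<in> Tri C" and b: "biproduct_with Y' Y A i1 i2 p1 p2"
  obtains Z' m n where "(X, Y', Z', i1 \<cdot> f, m, n) \<in> Tri C" "is_biproduct C Z' Z A"
proof -
  note c = exact_triangle_simps[OF t] and B = biproduct_withD[OF b]
  obtain Z' m n where t': "(X, Y', Z', i1 \<cdot> f, m, n) \<in> Tri C"
    using exact_triangle_exists[of "i1 \<cdot> f"] c B by auto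
  have "f \<in> Defs.hom C X Y" "i1 \<in> Defs.hom C Y Y'" using c B by (auto simp: hom_iff)
  then obtain u v where "(Z, Z', A, u, v, shm g \<cdot> zm A (sh Y)) \<in> Tri C"
    using octahedral[OF _ _ t biproduct_triangle[OF b] t'] by blast
  then have "(Z, Z', A, u, v, zm A (sh Z)) \<in> Tri C" using c B by simp
  then obtain s r where "biproduct_with Z' Z A u s r v" by (rule split_triangle_biproduct)
  then show ?thesis using that t' unfolding is_biproduct_iff by blast
qed

end

section \<open>Dense subcategories and Thomason's group\<close>

lemma (in comm_group) mult_eq_if_inverses:
  assumes "a \<in> carrier G" "b \<in> carrier G" "c \<in> carrier G" "a' \<in> carrier G" "c' \<in> carrier G"
    and "a \<otimes> a' = \<one>" "c \<otimes> c' = \<one>" "b \<otimes> c' \<otimes> a' = \<one>"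
  shows "b = a \<otimes> c"
proof -
  have "b = b \<otimes> (c \<otimes> c') \<otimes> (a \<otimes> a')" using assms by simp
  also have "\<dots> = (b \<otimes> c' \<otimes> a') \<otimes> (a \<otimes> c)" using assms(1-5) by (simp add: m_ac)
  finally show ?thesis using assms by simp
qed

locale dense_subcategory = triangulated_category +
  fixes D
  assumes dense: "is_dense_subcat C D"
begin

lemma triangulated_subcat: "is_triangulated_subcat C D"
  using dense unfolding is_dense_subcat_def by blast

lemma D_ob: "X \<in> D \<Longrightarrow> X \<in> Ob C"
  using triangulated_subcat unfolding is_triangulated_subcat_def by blast

lemma D_shift_iff: "X \<in> Ob C \<Longrightarrow> sh X \<in> D \<longleftrightarrow> X \<in> D"
  using triangulated_subcat unfolding is_triangulated_subcat_def by blast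

lemma D_isomorphic: "X \<in> D \<Longrightarrow> Defs.isomorphic C X Y \<Longrightarrow> Y \<in> D"
  using triangulated_subcat isomorphic_ob unfolding is_triangulated_subcat_def by blast

lemma D_isomorphic_iff: "Defs.isomorphic C X Y \<Longrightarrow> X \<in> D \<longleftrightarrow> Y \<in> D"
  using D_isomorphic isomorphic_sym by blast

lemma D_cone: "(X, Y, Z, f, g, h) \<in> Tri C \<Longrightarrow> X \<in> D \<Longrightarrow> Y \<in> D \<Longrightarrow> Z \<in> D"
  using triangulated_subcat unfolding is_triangulated_subcat_def by blast

lemma D_complement: "U \<in> Ob C \<Longrightarrow> \<exists>V \<in> Ob C. \<exists>S. is_biproduct C S U V \<and> S \<in> D"
  using dense unfolding is_dense_subcat_def by blast

lemma D_extension: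
  assumes t: "(X, Y, Z, f, g, h) \<in> Tri C" and "X \<in> D" "Z \<in> D"
  shows "Y \<in> D"
proof -
  have "sh Y \<in> D"
    using D_cone[OF exact_triangle_rotate2[OF t]] assms exact_triangle_simps[OF t] D_shift_iff by blast
  then show ?thesis using D_shift_iff exact_triangle_simps[OF t] by blast
qed

lemma D_biproduct: "is_biproduct C S X Y \<Longrightarrow> X \<in> D \<Longrightarrow> Y \<in> D \<Longrightarrow> S \<in> D"
  unfolding is_biproduct_iff using biproduct_triangle D_extension by blast

lemma D_biproduct_summand: "is_biproduct C S X Y \<Longrightarrow> X \<in> D \<Longrightarrow> S \<in> D \<Longrightarrow> Y \<in> D"
  unfolding is_biproduct_iff using biproduct_triangle D_cone by blast

text \<open>Rotate to Z \<rightarrow> X[1] \<rightarrow> Y[1] and compose with X[1] \<rightarrow> (X \<oplus> X')[1]: the cone of the composite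
  is Y[1] \<oplus> X'[1], and both Z and (X \<oplus> X')[1] lie in D.\<close>

lemma D_triangle_biproduct:
  assumes t: "(X, Y, Z, f, g, h) \<in> Tri C" and "Z \<in> D"
    and P: "is_biproduct C P X X'" "P \<in> D" and R: "is_biproduct C R Y X'"
  shows "R \<in> D"
proof -
  obtain i1 i2 p1 p2 where bP: "biproduct_with P X X' i1 i2 p1 p2"
    using P unfolding is_biproduct_iff by blast
  obtain Z' m n where Z': "(Z, sh P, Z', shm i1 \<cdot> h, m, n) \<in> Tri C"
    "is_biproduct C Z' (sh Y) (sh X')"
    using cone_comp_biproduct_inclusion[OF exact_triangle_rotate2[OF t] biproduct_with_shift[OF bP]] .
  have "sh P \<in> D" using P D_shift_iff D_ob by blast
  then have Z'D: "Z' \<in> D" using D_cone[OF Z'(1)] assms by blast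
  obtain j1 j2 q1 q2 where bR: "biproduct_with R Y X' j1 j2 q1 q2"
    using R unfolding is_biproduct_iff by blast
  have "is_biproduct C (sh R) (sh Y) (sh X')"
    using biproduct_with_shift[OF bR] unfolding is_biproduct_iff by blast
  then have "sh R \<in> D" using D_isomorphic is_biproduct_unique Z'(2) Z'D by blast
  then show ?thesis using D_shift_iff biproduct_withD(1)[OF bR] by blast
qed

definition D_equiv where
  "D_equiv X Y \<longleftrightarrow> X \<in> Ob C \<and> Y \<in> Ob C \<and>
     (\<forall>W S T. is_biproduct C S X W \<longrightarrow> is_biproduct C T Y W \<longrightarrow> (S \<in> D \<longleftrightarrow> T \<in> D))"

definition D_class where "D_class X = {Y. D_equiv X Y}"

definition bsum where "bsum X Y = (SOME S. is_biproduct C S X Y)"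

definition class_rep where "class_rep A = (SOME X. X \<in> Ob C \<and> A = D_class X)"

definition zero_object where "zero_object = (SOME Z. is_zero_obj C Z)"

definition thomason_group :: "'a set monoid" where
  "thomason_group = \<lparr>carrier = D_class ` Ob C,
     monoid.mult = (\<lambda>A B. D_class (bsum (class_rep A) (class_rep B))),
     one = D_class zero_object\<rparr>"

lemma zero_object: "is_zero_obj C zero_object"
  unfolding zero_object_def using zero_obj_exists by (rule someI_ex)

lemma zero_object_ob: "zero_object \<in> Ob C"
  using zero_obj_ob[OF zero_object] .

lemma bsum: "X \<in> Ob C \<Longrightarrow> Y \<in> Ob C \<Longrightarrow> is_biproduct C (bsum X Y) X Y"
  unfolding bsum_def using is_biproduct_exists by (rule someI_ex)

lemma bsum_ob: "X \<in> Ob C \<Longrightarrow> Y \<in> Ob C \<Longrightarrow> bsum X Y \<in> Ob C"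
  using bsum is_biproduct_ob by blast

lemma D_equiv_if_isomorphic:
  assumes "Defs.isomorphic C X Y"
  shows "D_equiv X Y"
proof -
  have "S \<in> D \<longleftrightarrow> T \<in> D" if "is_biproduct C S X W" "is_biproduct C T Y W" for W S T
    using is_biproduct_iso_cong[OF that assms] D_isomorphic_iff by blast
  then show ?thesis unfolding D_equiv_def using isomorphic_ob[OF assms] by blast
qed

lemma D_equiv_refl: "X \<in> Ob C \<Longrightarrow> D_equiv X X"
  using D_equiv_if_isomorphic isomorphic_refl by blast

lemma D_equiv_sym: "D_equiv X Y \<Longrightarrow> D_equiv Y X"
  unfolding D_equiv_def by blast

lemma D_equiv_trans:
  assumes "D_equiv X Y" "D_equiv Y Z"
  shows "D_equiv X Z"
proof -
  have "S \<in> D \<longleftrightarrow> T \<in> D" if "is_biproduct C S X W" "is_biproduct C T Z W" for W S T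
  proof -
    have "W \<in> Ob C" "Y \<in> Ob C" using that(1) assms(1) is_biproduct_ob D_equiv_def by auto
    then obtain R where "is_biproduct C R Y W" using is_biproduct_exists by blast
    then show ?thesis using assms that unfolding D_equiv_def by blast
  qed
  then show ?thesis using assms unfolding D_equiv_def by blast
qed

lemma D_class_eq_iff: "X \<in> Ob C \<Longrightarrow> Y \<in> Ob C \<Longrightarrow> D_class X = D_class Y \<longleftrightarrow> D_equiv X Y"
  unfolding D_class_def using D_equiv_refl D_equiv_sym D_equiv_trans by blast

lemma class_rep:
  assumes "X \<in> Ob C"
  shows "class_rep (D_class X) \<in> Ob C" "D_equiv X (class_rep (D_class X))"
proof -
  have "\<exists>Y. Y \<in> Ob C \<and> D_class X = D_class Y" using assms by blast
  then have "class_rep (D_class X) \<in> Ob C \<and> D_class X = D_class (class_rep (D_class X))"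
    unfolding class_rep_def by (rule someI_ex)
  then show "class_rep (D_class X) \<in> Ob C" "D_equiv X (class_rep (D_class X))"
    using D_class_eq_iff assms by blast+
qed

lemma D_equiv_biproduct_left:
  assumes e: "D_equiv X X'" and S: "is_biproduct C S X Y" and S': "is_biproduct C S' X' Y"
  shows "D_equiv S S'"
proof -
  have "P \<in> D \<longleftrightarrow> P' \<in> D" if P: "is_biproduct C P S W" and P': "is_biproduct C P' S' W" for W P P'
  proof -
    have ob: "X \<in> Ob C" "X' \<in> Ob C" "Y \<in> Ob C" "W \<in> Ob C"
      using S S' P is_biproduct_ob by blast+
    obtain R where R: "is_biproduct C R Y W" using is_biproduct_exists ob by blast
    have "R \<in> Ob C" using R is_biproduct_ob by blast
    then obtain Q Q' where Q: "is_biproduct C Q X R" and Q': "is_biproduct C Q' X' R"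
      using is_biproduct_exists ob by metis
    have "Defs.isomorphic C P Q" using is_biproduct_unique is_biproduct_assoc[OF S P R] Q by blast
    moreover have "Defs.isomorphic C P' Q'"
      using is_biproduct_unique is_biproduct_assoc[OF S' P' R] Q' by blast
    moreover have "Q \<in> D \<longleftrightarrow> Q' \<in> D" using e Q Q' unfolding D_equiv_def by blast
    ultimately show ?thesis using D_isomorphic_iff by blast
  qed
  then show ?thesis using S S' is_biproduct_ob unfolding D_equiv_def by blast
qed

lemma D_equiv_biproduct:
  assumes e: "D_equiv X X'" "D_equiv Y Y'"
    and S: "is_biproduct C S X Y" and S': "is_biproduct C S' X' Y'"
  shows "D_equiv S S'"
proof -
  have "X' \<in> Ob C" "Y \<in> Ob C" using e unfolding D_equiv_def by blast+
  then obtain S'' where S'': "is_biproduct C S'' X' Y" using is_biproduct_exists by blast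
  have "D_equiv S S''" using D_equiv_biproduct_left[OF e(1) S S''] .
  moreover have "D_equiv S'' S'"
    using D_equiv_biproduct_left[OF e(2) is_biproduct_swap[OF S''] is_biproduct_swap[OF S']] .
  ultimately show ?thesis using D_equiv_trans by blast
qed

lemma thomason_mult:
  assumes "is_biproduct C S X Y"
  shows "D_class X \<otimes>\<^bsub>thomason_group\<^esub> D_class Y = D_class S"
proof -
  have ob: "X \<in> Ob C" "Y \<in> Ob C" "S \<in> Ob C" using assms is_biproduct_ob by blast+
  note r = class_rep[OF ob(1)] class_rep[OF ob(2)]
  have "D_equiv (bsum (class_rep (D_class X)) (class_rep (D_class Y))) S"
    using D_equiv_biproduct[OF D_equiv_sym[OF r(2)] D_equiv_sym[OF r(4)] bsum[OF r(1,3)] assms] .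
  then show ?thesis unfolding thomason_group_def using D_class_eq_iff bsum_ob r ob by simp
qed

lemma thomason_group_carrier: "carrier thomason_group = D_class ` Ob C"
  unfolding thomason_group_def by simp

lemma thomason_group_one: "\<one>\<^bsub>thomason_group\<^esub> = D_class zero_object"
  unfolding thomason_group_def by simp

lemma D_class_eq_one_iff:
  assumes X: "X \<in> Ob C"
  shows "D_class X = \<one>\<^bsub>thomason_group\<^esub> \<longleftrightarrow> X \<in> D"
proof
  assume "D_class X = \<one>\<^bsub>thomason_group\<^esub>"
  then have e: "D_equiv X zero_object"
    using D_class_eq_iff X zero_object_ob thomason_group_one by simp
  obtain V S where V: "V \<in> Ob C" "is_biproduct C S X V" "S \<in> D" using D_complement X by blast
  obtain T where T: "is_biproduct C T zero_object V" using is_biproduct_exists zero_object_ob V by blast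
  have "T \<in> D" using e V T unfolding D_equiv_def by blast
  then have "V \<in> D" using D_isomorphic is_biproduct_zero_left[OF T zero_object] by blast
  then show "X \<in> D" using D_biproduct_summand[OF is_biproduct_swap[OF V(2)]] V by blast
next
  assume XD: "X \<in> D"
  have "S \<in> D \<longleftrightarrow> T \<in> D"
    if S: "is_biproduct C S X W" and T: "is_biproduct C T zero_object W" for W S T
    using D_biproduct_summand[OF S XD] D_biproduct[OF S XD] D_isomorphic_iff
      is_biproduct_zero_left[OF T zero_object] by blast
  then have "D_equiv X zero_object" unfolding D_equiv_def using X zero_object_ob by blast
  then show "D_class X = \<one>\<^bsub>thomason_group\<^esub>"
    using D_class_eq_iff X zero_object_ob thomason_group_one by simp
qed

lemma thomason_mult_assoc:
  assumes "X \<in> Ob C" "Y \<in> Ob C" "W \<in> Ob C"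
  shows "D_class X \<otimes>\<^bsub>thomason_group\<^esub> D_class Y \<otimes>\<^bsub>thomason_group\<^esub> D_class W
       = D_class X \<otimes>\<^bsub>thomason_group\<^esub> (D_class Y \<otimes>\<^bsub>thomason_group\<^esub> D_class W)"
proof -
  define S R where "S = bsum X Y" and "R = bsum Y W"
  have S: "is_biproduct C S X Y" and R: "is_biproduct C R Y W"
    using bsum assms unfolding S_def R_def by blast+
  then have ob: "S \<in> Ob C" "R \<in> Ob C" using is_biproduct_ob by blast+
  have P: "is_biproduct C (bsum S W) S W" and Q: "is_biproduct C (bsum X R) X R"
    using bsum assms ob by blast+
  have "Defs.isomorphic C (bsum S W) (bsum X R)"
    using is_biproduct_unique[OF is_biproduct_assoc[OF S P R] Q] .
  then have "D_class (bsum S W) = D_class (bsum X R)"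
    using D_class_eq_iff D_equiv_if_isomorphic isomorphic_ob by blast
  then show ?thesis using thomason_mult S R P Q by simp
qed

lemma thomason_comm_group: "comm_group thomason_group"
proof (rule comm_groupI, unfold thomason_group_carrier)
  fix x y assume "x \<in> D_class ` Ob C" "y \<in> D_class ` Ob C"
  then obtain X Y where XY: "X \<in> Ob C" "Y \<in> Ob C" "x = D_class X" "y = D_class Y" by blast
  show "x \<otimes>\<^bsub>thomason_group\<^esub> y \<in> D_class ` Ob C"
    using XY thomason_mult[OF bsum] bsum_ob by simp
  show "x \<otimes>\<^bsub>thomason_group\<^esub> y = y \<otimes>\<^bsub>thomason_group\<^esub> x"
    using XY thomason_mult[OF bsum[OF XY(1,2)]] thomason_mult[OF is_biproduct_swap[OF bsum[OF XY(1,2)]]]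
    by simp
next
  show "\<one>\<^bsub>thomason_group\<^esub> \<in> D_class ` Ob C"
    unfolding thomason_group_one using zero_object_ob by blast
next
  fix x y w assume "x \<in> D_class ` Ob C" "y \<in> D_class ` Ob C" "w \<in> D_class ` Ob C"
  then show "x \<otimes>\<^bsub>thomason_group\<^esub> y \<otimes>\<^bsub>thomason_group\<^esub> w
      = x \<otimes>\<^bsub>thomason_group\<^esub> (y \<otimes>\<^bsub>thomason_group\<^esub> w)"
    using thomason_mult_assoc by blast
next
  fix x assume "x \<in> D_class ` Ob C"
  then obtain X where X: "X \<in> Ob C" "x = D_class X" by blast
  have "is_biproduct C (bsum zero_object X) zero_object X" using bsum zero_object_ob X by blast
  moreover have "D_class (bsum zero_object X) = D_class X"
    using D_class_eq_iff D_equiv_if_isomorphic bsum_ob zero_object_ob X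
      is_biproduct_zero_left[OF calculation zero_object] by blast
  ultimately show "\<one>\<^bsub>thomason_group\<^esub> \<otimes>\<^bsub>thomason_group\<^esub> x = x"
    using thomason_mult thomason_group_one X by metis
  obtain V S where V: "V \<in> Ob C" "is_biproduct C S X V" "S \<in> D" using D_complement X by blast
  then have "D_class V \<otimes>\<^bsub>thomason_group\<^esub> x = \<one>\<^bsub>thomason_group\<^esub>"
    using thomason_mult[OF is_biproduct_swap[OF V(2)]] D_class_eq_one_iff D_ob X by simp
  then show "\<exists>y \<in> D_class ` Ob C. y \<otimes>\<^bsub>thomason_group\<^esub> x = \<one>\<^bsub>thomason_group\<^esub>"
    using V by blast
qed

sublocale G: comm_group thomason_group
  by (rule thomason_comm_group)

lemma D_class_carrier: "X \<in> Ob C \<Longrightarrow> D_class X \<in> carrier thomason_group"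
  unfolding thomason_group_carrier by blast

text \<open>Pick U \<oplus> U' and W \<oplus> W' in D. The cone of the composite U \<rightarrow> V \<rightarrow> V \<oplus> W' is
  W \<oplus> W' \<in> D, hence (V \<oplus> W') \<oplus> U' \<in> D, i.e. [V][W'][U'] = 1, while [U][U'] = [W][W'] = 1.\<close>

lemma D_class_triangle:
  assumes t: "(U, V, W, f, g, h) \<in> Tri C"
  shows "D_class V = D_class U \<otimes>\<^bsub>thomason_group\<^esub> D_class W"
proof -
  note c = exact_triangle_simps[OF t]
  obtain U' SU where U': "U' \<in> Ob C" "is_biproduct C SU U U'" "SU \<in> D"
    using D_complement c by blast
  obtain W' SW where W': "W' \<in> Ob C" "is_biproduct C SW W W'" "SW \<in> D"
    using D_complement c by blast
  define Y where "Y = bsum V W'"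
  have Y: "is_biproduct C Y V W'" "Y \<in> Ob C" using bsum bsum_ob c W' Y_def by auto
  obtain i1 i2 p1 p2 where "biproduct_with Y V W' i1 i2 p1 p2"
    using Y unfolding is_biproduct_iff by blast
  then obtain Z m n where Z: "(U, Y, Z, i1 \<cdot> f, m, n) \<in> Tri C" "is_biproduct C Z W W'"
    using cone_comp_biproduct_inclusion[OF t] by metis
  have "Z \<in> D" using D_isomorphic is_biproduct_unique[OF W'(2) Z(2)] W'(3) by blast
  then have "bsum Y U' \<in> D" using D_triangle_biproduct[OF Z(1) _ U'(2,3) bsum[OF Y(2) U'(1)]] by blast
  then have "D_class V \<otimes>\<^bsub>thomason_group\<^esub> D_class W' \<otimes>\<^bsub>thomason_group\<^esub> D_class U'
      = \<one>\<^bsub>thomason_group\<^esub>"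
    using thomason_mult[OF Y(1)] thomason_mult[OF bsum[OF Y(2) U'(1)]] D_class_eq_one_iff D_ob
    by simp
  moreover have "D_class U \<otimes>\<^bsub>thomason_group\<^esub> D_class U' = \<one>\<^bsub>thomason_group\<^esub>"
    "D_class W \<otimes>\<^bsub>thomason_group\<^esub> D_class W' = \<one>\<^bsub>thomason_group\<^esub>"
    using thomason_mult U' W' D_class_eq_one_iff D_ob by simp_all
  ultimately show ?thesis
    using G.mult_eq_if_inverses D_class_carrier c U'(1) W'(1) by blast
qed

section \<open>Relations of the Grothendieck group\<close>

definition supp :: "('a \<Rightarrow> int) \<Rightarrow> 'a set" where "supp a = {X. a X \<noteq> 0}"

definition ob_comb :: "('a \<Rightarrow> int) \<Rightarrow> bool" where
  "ob_comb a \<longleftrightarrow> finite (supp a) \<and> supp a \<subseteq> Ob C"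

definition class_sum :: "('a \<Rightarrow> int) \<Rightarrow> 'a set" where
  "class_sum a = finprod thomason_group (\<lambda>X. D_class X [^]\<^bsub>thomason_group\<^esub> a X) (supp a)"

lemma ob_comb_zero: "ob_comb (\<lambda>_. 0)"
  unfolding ob_comb_def supp_def by simp

lemma ob_comb_gen: "X \<in> Ob C \<Longrightarrow> ob_comb (gen X)"
  unfolding ob_comb_def supp_def gen_def by simp

lemma ob_comb_add:
  assumes "ob_comb a" "ob_comb b"
  shows "ob_comb (\<lambda>A. a A + b A)"
proof -
  have "supp (\<lambda>A. a A + b A) \<subseteq> supp a \<union> supp b" unfolding supp_def by auto
  moreover have "finite (supp a \<union> supp b)" using assms unfolding ob_comb_def by blast
  ultimately show ?thesis using assms finite_subset unfolding ob_comb_def by blast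
qed

lemma ob_comb_neg: "ob_comb (\<lambda>A. - a A) \<longleftrightarrow> ob_comb a"
  unfolding ob_comb_def supp_def by simp

lemma ob_comb_diff: "ob_comb a \<Longrightarrow> ob_comb b \<Longrightarrow> ob_comb (\<lambda>A. a A - b A)"
  using ob_comb_add[of a "\<lambda>A. - b A"] ob_comb_neg[of b] by simp

lemma class_sum_superset:
  assumes "finite F" "supp a \<subseteq> F" "F \<subseteq> Ob C"
  shows "class_sum a = finprod thomason_group (\<lambda>X. D_class X [^]\<^bsub>thomason_group\<^esub> a X) F"
  unfolding class_sum_def
proof (rule G.finprod_mono_neutral_cong_left)
  show "(\<lambda>X. D_class X [^]\<^bsub>thomason_group\<^esub> a X) \<in> F \<rightarrow> carrier thomason_group"
    using assms D_class_carrier by auto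
qed (use assms in \<open>auto simp: supp_def\<close>)

lemma class_sum_closed: "ob_comb a \<Longrightarrow> class_sum a \<in> carrier thomason_group"
  unfolding class_sum_def ob_comb_def by (rule G.finprod_closed) (use D_class_carrier in auto)

lemma class_sum_zero: "class_sum (\<lambda>_. 0) = \<one>\<^bsub>thomason_group\<^esub>"
  unfolding class_sum_def supp_def by simp

lemma class_sum_gen: "X \<in> Ob C \<Longrightarrow> class_sum (gen X) = D_class X"
  using class_sum_superset[of "{X}" "gen X"] D_class_carrier[of X]
  by (simp add: gen_def supp_def)

lemma class_sum_add:
  assumes "ob_comb a" "ob_comb b"
  shows "class_sum (\<lambda>A. a A + b A) = class_sum a \<otimes>\<^bsub>thomason_group\<^esub> class_sum b"
proof -
  define F where "F = supp a \<union> supp b"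
  have F: "finite F" "F \<subseteq> Ob C" using assms unfolding F_def ob_comb_def by auto
  have "supp (\<lambda>A. a A + b A) \<subseteq> F" unfolding F_def supp_def by auto
  then have "class_sum (\<lambda>A. a A + b A)
      = finprod thomason_group (\<lambda>X. D_class X [^]\<^bsub>thomason_group\<^esub> (a X + b X)) F"
    using class_sum_superset F by auto
  also have "\<dots> = finprod thomason_group (\<lambda>X. D_class X [^]\<^bsub>thomason_group\<^esub> a X
      \<otimes>\<^bsub>thomason_group\<^esub> D_class X [^]\<^bsub>thomason_group\<^esub> b X) F"
    by (rule G.finprod_cong') (use F D_class_carrier G.int_pow_mult in auto)
  also have "\<dots> = finprod thomason_group (\<lambda>X. D_class X [^]\<^bsub>thomason_group\<^esub> a X) F
      \<otimes>\<^bsub>thomason_group\<^esub> finprod thomason_group (\<lambda>X. D_class X [^]\<^bsub>thomason_group\<^esub> b X) F"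
    by (rule G.finprod_multf) (use F D_class_carrier in auto)
  also have "\<dots> = class_sum a \<otimes>\<^bsub>thomason_group\<^esub> class_sum b"
    using class_sum_superset[of F a] class_sum_superset[of F b] F F_def by auto
  finally show ?thesis .
qed

lemma class_sum_neg:
  assumes "ob_comb a"
  shows "class_sum (\<lambda>A. - a A) = inv\<^bsub>thomason_group\<^esub> (class_sum a)"
proof -
  have "class_sum (\<lambda>A. - a A) \<otimes>\<^bsub>thomason_group\<^esub> class_sum a = class_sum (\<lambda>_. 0)"
    using class_sum_add[of "\<lambda>A. - a A" a] assms ob_comb_neg[of a] by simp
  then show ?thesis
    using G.inv_equality class_sum_closed class_sum_zero assms ob_comb_neg[of a] by simp
qed

lemma class_sum_diff:
  assumes "ob_comb a" "ob_comb b"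
  shows "class_sum (\<lambda>A. a A - b A) = class_sum a \<otimes>\<^bsub>thomason_group\<^esub> inv\<^bsub>thomason_group\<^esub> class_sum b"
  using class_sum_add[of a "\<lambda>A. - b A"] class_sum_neg[of b] ob_comb_neg[of b] assms by simp

lemma class_sum_grel:
  assumes "a \<in> grel C"
  shows "ob_comb a \<and> class_sum a = \<one>\<^bsub>thomason_group\<^esub>"
  using assms
proof (induction rule: grel.induct)
  case grel_zero
  then show ?case using ob_comb_zero class_sum_zero by simp
next
  case (grel_iso X Y)
  have "D_class Y = D_class X"
    using D_equiv_if_isomorphic[OF grel_iso(3)] D_class_eq_iff grel_iso by blast
  then show ?case
    using class_sum_diff ob_comb_diff ob_comb_gen class_sum_gen D_class_carrier grel_iso by simp
next
  case (grel_tri U V W f g h)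
  note c = exact_triangle_simps[OF grel_tri]
  have "class_sum (\<lambda>A. gen V A - gen U A - gen W A)
      = D_class V \<otimes>\<^bsub>thomason_group\<^esub> inv\<^bsub>thomason_group\<^esub> D_class U
          \<otimes>\<^bsub>thomason_group\<^esub> inv\<^bsub>thomason_group\<^esub> D_class W"
    using class_sum_diff ob_comb_diff ob_comb_gen class_sum_gen c by simp
  also have "\<dots> = D_class V \<otimes>\<^bsub>thomason_group\<^esub>
      inv\<^bsub>thomason_group\<^esub> (D_class U \<otimes>\<^bsub>thomason_group\<^esub> D_class W)"
    using D_class_carrier c by (simp add: G.m_assoc G.inv_mult)
  also have "\<dots> = \<one>\<^bsub>thomason_group\<^esub>"
    using D_class_triangle[OF grel_tri] D_class_carrier c by simp
  finally show ?case using ob_comb_diff ob_comb_gen c by simp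
next
  case (grel_add a b)
  then show ?case using class_sum_add ob_comb_add by simp
next
  case (grel_neg a)
  then show ?case using class_sum_neg ob_comb_neg by simp
qed

lemma class_sum_multiple_gen:
  assumes "U \<in> Ob C"
  shows "class_sum (\<lambda>A. int n * gen U A) = D_class U [^]\<^bsub>thomason_group\<^esub> n"
proof -
  have "supp (\<lambda>A. int n * gen U A) \<subseteq> {U}" unfolding supp_def gen_def by auto
  then have "class_sum (\<lambda>A. int n * gen U A)
      = finprod thomason_group (\<lambda>X. D_class X [^]\<^bsub>thomason_group\<^esub> (int n * gen U X)) {U}"
    using class_sum_superset assms by auto
  also have "\<dots> = D_class U [^]\<^bsub>thomason_group\<^esub> int n"
    using D_class_carrier assms by (simp add: gen_def)
  finally show ?thesis by (simp add: int_pow_int)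
qed

lemma power_D_class:
  assumes "U \<in> Ob C" "n \<ge> 1"
  obtains S where "S \<in> Ob C" "is_power C n S U" "D_class S = D_class U [^]\<^bsub>thomason_group\<^esub> n"
proof -
  have "\<exists>S. S \<in> Ob C \<and> is_power C (Suc m) S U \<and> D_class S = D_class U [^]\<^bsub>thomason_group\<^esub> Suc m"
    for m
  proof (induction m)
    case 0
    then show ?case using assms isomorphic_refl D_class_carrier by (intro exI[of _ U]) simp
  next
    case (Suc m)
    then obtain T where T: "T \<in> Ob C" "is_power C (Suc m) T U"
      "D_class T = D_class U [^]\<^bsub>thomason_group\<^esub> Suc m" by blast
    then have "is_power C (Suc (Suc m)) (bsum T U) U" using bsum assms(1) by auto
    moreover have "D_class (bsum T U) = D_class U [^]\<^bsub>thomason_group\<^esub> Suc (Suc m)"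
      using thomason_mult[OF bsum[OF T(1) assms(1)]] T(3) by simp
    ultimately show ?case using bsum_ob T(1) assms(1) by blast
  qed
  moreover obtain m where "n = Suc m" using assms(2) not0_implies_Suc by fastforce
  ultimately show ?thesis using that by blast
qed

end

theorem lemma3p9:
  fixes C :: "('o, 'm) tricat" and D :: "'o set" and U :: 'o
  assumes "is_triangulated C"
    and "is_dense_subcat C D"
    and "is_radical C D"
    and "U \<in> Ob C"
    and "class_torsion C U"
  shows "U \<in> D"
proof -
  interpret dense_subcategory C D
    using assms(1,2) by unfold_locales
  obtain n where n: "n \<ge> 1" "(\<lambda>A. int n * gen U A) \<in> grel C"
    using assms(5) unfolding class_torsion_def by blast
  obtain S where S: "S \<in> Ob C" "is_power C n S U" "D_class S = D_class U [^]\<^bsub>thomason_group\<^esub> n"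
    using power_D_class[OF assms(4) n(1)] .
  have "D_class U [^]\<^bsub>thomason_group\<^esub> n = \<one>\<^bsub>thomason_group\<^esub>"
    using class_sum_grel[OF n(2)] class_sum_multiple_gen[OF assms(4)] by simp
  then have "S \<in> D" using S D_class_eq_one_iff by simp
  then show ?thesis using assms(3,4) S(2) n(1) unfolding is_radical_def by blast
qed

end
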